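(* For integers $m,n\ge0$, $$\sum_{i=2n-m+1}^{m}\binom{m}{i}\frac{(m+i)!}{(m+i-2n-1)!}(-2)^{-i}=0,$$ where $\binom{m}{i}=0$ for $i<0$. *)

theory Defs imports Complex_Main begin

definition int_binom :: "nat \<Rightarrow> int \<Rightarrow> nat" where
  "int_binom m i = (if i < 0 then 0 else m choose nat i)"

end

theory Submission imports Defs "HOL-Computational_Algebra.Polynomial" begin

text \<open>Writing \<open>k = 2n + 1\<close>, the ratio of factorials is \<open>k! \<cdot> binom(m+i, k)\<close>, so up to the factor
  \<open>k!\<close> the sum is \<open>\<Sum>\<^sub>i binom(m, i) (-1/2)\<^sup>i binom(m+i, k)\<close>. This is the coefficient of \<open>x\<^sup>k\<close> in
  \<open>\<Sum>\<^sub>i binom(m, i) (-1/2)\<^sup>i (1+x)\<^sup>m\<^sup>+\<^sup>i = ((1+x)(1 - (1+x)/2))\<^sup>m = ((1 - x\<^sup>2)/2)\<^sup>m\<close>,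
  an even polynomial, and \<open>k\<close> is odd.\<close>

definition even_poly :: "'a::comm_semiring_1 poly \<Rightarrow> bool" where
  "even_poly p \<longleftrightarrow> (\<forall>k. odd k \<longrightarrow> coeff p k = 0)"

lemma even_poly_mult:
  assumes "even_poly p" "even_poly q"
  shows "even_poly (p * q)"
  unfolding even_poly_def
proof (intro allI impI)
  fix k :: nat assume "odd k"
  have "coeff p i * coeff q (k - i) = 0" if "i \<le> k" for i
    using assms \<open>odd k\<close> that by (cases "odd i") (auto simp: even_poly_def)
  then show "coeff (p * q) k = 0"
    by (simp add: coeff_mult)
qed

lemma even_poly_power: "even_poly p \<Longrightarrow> even_poly (p ^ n)"
proof (induction n)
  case 0
  then show ?case by (auto simp: even_poly_def odd_pos)
next
  case (Suc n)
  then show ?case by (simp add: even_poly_mult)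
qed

lemma even_poly_quadratic: "even_poly [:a, 0, b:]"
  unfolding even_poly_def
proof (intro allI impI)
  fix k :: nat assume "odd k"
  then have "k = 1 \<or> 3 \<le> k"
    by presburger
  then show "coeff [:a, 0, b:] k = 0"
    by (auto simp: coeff_pCons split: nat.split)
qed

lemma coeff_one_plus_X_power:
  "coeff ([:1, 1:] ^ n) i = (of_nat (n choose i) :: 'a::comm_semiring_1)"
proof (cases "i \<le> n")
  case True
  then show ?thesis by (simp add: coeff_linear_poly_power)
next
  case False
  then have "degree ([:1::'a, 1:] ^ n) < i"
    using degree_linear_power[of "1::'a" n] by simp
  with False show ?thesis by (simp add: coeff_eq_0 binomial_eq_0)
qed

lemma sum_binomial_half_powers_poly:
  "(\<Sum>j\<le>m. smult (of_nat (m choose j) * (-1/2) ^ j) ([:1, 1:] ^ (m + j)))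
     = ([:1/2, 0, -1/2:] :: 'a::field_char_0 poly) ^ m"
proof -
  let ?p = "[:1, 1:] :: 'a poly"
  have summand: "smult (of_nat c * x ^ j) (A ^ (m + j)) = A ^ m * (of_nat c * smult x A ^ j * 1 ^ (m - j))"
    for c j and x :: 'a and A :: "'a poly"
  proof -
    have "smult (of_nat c * x ^ j) (A ^ (m + j)) = smult (of_nat c) (A ^ m * smult (x ^ j) (A ^ j))"
      by (simp add: power_add mult_ac)
    also have "\<dots> = A ^ m * (of_nat c * smult x A ^ j * 1 ^ (m - j))"
      by (simp add: smult_power of_nat_poly mult.commute)
    finally show ?thesis .
  qed
  have "(\<Sum>j\<le>m. smult (of_nat (m choose j) * (-1/2) ^ j) (?p ^ (m + j)))
      = ?p ^ m * (\<Sum>j\<le>m. of_nat (m choose j) * smult (-1/2) ?p ^ j * 1 ^ (m - j))"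
    unfolding sum_distrib_left
    by (intro sum.cong) (simp_all only: summand)
  also have "\<dots> = ?p ^ m * (smult (-1/2) ?p + 1) ^ m"
    by (simp add: binomial_ring)
  also have "\<dots> = (?p * (smult (-1/2) ?p + 1)) ^ m"
    by (rule power_mult_distrib[symmetric])
  also have "?p * (smult (-1/2) ?p + 1) = [:1/2, 0, -1/2:]"
    by (simp add: one_pCons)
  finally show ?thesis .
qed

lemma sum_binomial_half_powers_odd:
  assumes "odd k"
  shows "(\<Sum>j\<le>m. of_nat (m choose j) * (-1/2) ^ j * of_nat ((m + j) choose k)) = (0::'a::field_char_0)"
proof -
  have "(\<Sum>j\<le>m. of_nat (m choose j) * (-1/2) ^ j * of_nat ((m + j) choose k))
      = coeff ([:1/2, 0, -1/2:] ^ m :: 'a poly) k"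
    unfolding sum_binomial_half_powers_poly[symmetric] coeff_sum
    by (simp add: coeff_one_plus_X_power)
  also have "\<dots> = (0::'a)"
  proof -
    have "even_poly ([:1/2, 0, -1/2:] ^ m :: 'a poly)"
      by (intro even_poly_power even_poly_quadratic)
    with assms show ?thesis
      unfolding even_poly_def by blast
  qed
  finally show ?thesis .
qed

lemma summand_as_binomials:
  assumes "k \<le> m + j"
  shows "real (int_binom m (int j)) * (fact (nat (int m + int j)) / fact (nat (int m + int j - int k)))
           * (-2::real) powi (- int j)
         = fact k * (real (m choose j) * (-1/2) ^ j * real ((m + j) choose k))"
proof -
  have nat_diff: "nat (int m + int j - int k) = m + j - k"
    using assms by auto
  have powi: "(-2::real) powi (- int j) = (-1/2) ^ j"
    by (simp add: power_int_minus power_inverse[symmetric])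
  have "real (int_binom m (int j)) * (fact (nat (int m + int j)) / fact (nat (int m + int j - int k)))
           * (-2::real) powi (- int j)
         = real (m choose j) * (fact k * real ((m + j) choose k)) * (-1/2) ^ j"
    unfolding nat_diff powi nat_int_add fact_binomial[OF assms, symmetric] by (simp add: int_binom_def)
  then show ?thesis
    by (simp add: mult_ac)
qed

theorem lemma4p10:
  fixes m n :: nat
  shows "(\<Sum>i\<in>{2 * int n - int m + 1 .. int m}.
            real (int_binom m i)
            * (fact (nat (int m + i)) / fact (nat (int m + i - 2 * int n - 1)))
            * (-2::real) powi (- i)) = 0"
proof -
  define k where "k = 2 * n + 1"
  define F where "F j = fact k * (real (m choose j) * (-1/2) ^ j * real ((m + j) choose k))" for j
  have "(\<Sum>i\<in>{2 * int n - int m + 1 .. int m}.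
            real (int_binom m i)
            * (fact (nat (int m + i)) / fact (nat (int m + i - 2 * int n - 1)))
            * (-2::real) powi (- i)) = (\<Sum>i\<in>{0..int m}. F (nat i))"
  \<comment> \<open>Extra terms vanish: for \<open>i < 0\<close> by \<open>int_binom\<close>, for \<open>m + i < k\<close> by \<open>binom(m+i, k) = 0\<close>.\<close>
  proof (rule sum.mono_neutral_cong)
    fix i assume "i \<in> {2 * int n - int m + 1 .. int m} \<inter> {0..int m}"
    then obtain j where "i = int j" "k \<le> m + j"
      unfolding k_def by (cases i) auto
    then show "real (int_binom m i) * (fact (nat (int m + i)) / fact (nat (int m + i - 2 * int n - 1)))
            * (-2::real) powi (- i) = F (nat i)"
      using summand_as_binomials[of k m j] by (simp add: F_def k_def algebra_simps)
  qed (auto simp: int_binom_def F_def k_def)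
  also have "\<dots> = (\<Sum>j\<le>m. F j)"
    by (simp add: image_int_atLeastAtMost[symmetric, of 0 m, simplified] sum.reindex atMost_atLeast0)
  also have "\<dots> = 0"
    using sum_binomial_half_powers_odd[of k m, where 'a=real]
    by (simp add: F_def k_def sum_distrib_left[symmetric])
  finally show ?thesis .
qed

end
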